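(* Let $(\mathsf{X},\mu)$, $(\mathsf{Y},\nu)$ be Polish probability spaces and $c:\mathsf{X}\times\mathsf{Y}\to[0,\infty)$ measurable, and for each $\varepsilon>0$ let $\pi_\varepsilon$ be the $(c,\varepsilon)$-cyclically invariant coupling (assumed to exist for every $\varepsilon>0$). Let $k\ge2$ and $0\le\delta\le\delta'\le\infty$. Define $$A_k(\delta,\delta'):=\Big\{(x_i,y_i)_{i=1}^k\in(\mathsf{X}\times\mathsf{Y})^k:\ \delta\le\sum_{i=1}^k c(x_i,y_i)-\sum_{i=1}^k c(x_i,y_{i+1})\le\delta'\Big\},$$ with $y_{k+1}:=y_1$, and let $A\subset A_k(\delta,\delta')$ be Borel. Then $\pi_\varepsilon^k:=\prod_{i=1}^k\pi_\varepsilon(dx_i,dy_i)$ (the $k$-fold product measure on $(\mathsf{X}\times\mathsf{Y})^k$) satisfies $$\pi_\varepsilon^k(A)\le e^{-\delta/\varepsilon}\quad\text{for all }\varepsilon>0.$$ Suppose in addition that $\bar A:=\{(x_i,y_{i+1})_{i=1}^k:\ (x_i,y_i)_{i=1}^k\in A\}$ satisfies $\liminf_{\varepsilon\to0}\varepsilon\log\pi_\varepsilon^k(\bar A)=0$. Then $$\liminf_{\varepsilon\to0}\varepsilon\log\pi_\varepsilon^k(A)\ge-\delta'.$$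
   Context: $\Pi(\mu,\nu)$ is the set of couplings of $\mu,\nu$ and $P:=\mu\otimes\nu$. A coupling $\pi\in\Pi(\mu,\nu)$ is $(c,\varepsilon)$-cyclically invariant if $\pi\sim P$ and its density admits a version $\frac{d\pi}{dP}:\mathsf{X}\times\mathsf{Y}\to(0,\infty)$ such that $\prod_{i=1}^k\frac{d\pi}{dP}(x_i,y_i)=\exp\big(-\frac1\varepsilon[\sum_{i=1}^k c(x_i,y_i)-\sum_{i=1}^k c(x_i,y_{i+1})]\big)\prod_{i=1}^k\frac{d\pi}{dP}(x_i,y_{i+1})$ for all $k\in\mathbb{N}$ and $(x_i,y_i)_{i=1}^k\subset\mathsf{X}\times\mathsf{Y}$, with $y_{k+1}:=y_1$. There is at most one such coupling for each $\varepsilon$. *)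

theory Defs
  imports "HOL-Probability.Probability"
begin

definition elog :: "real \<Rightarrow> ereal" where
  "elog p = (if p > 0 then ereal (ln p) else -\<infinity>)"

definition coupling :: "'a measure \<Rightarrow> 'b measure \<Rightarrow> ('a \<times> 'b) measure \<Rightarrow> bool" where
  "coupling \<mu> \<nu> \<pi> \<longleftrightarrow> sets \<pi> = sets (\<mu> \<Otimes>\<^sub>M \<nu>)
     \<and> distr \<pi> \<mu> fst = \<mu> \<and> distr \<pi> \<nu> snd = \<nu>"

definition cyc_inv_coupling ::
  "'a measure \<Rightarrow> 'b measure \<Rightarrow> ('a \<times> 'b \<Rightarrow> real) \<Rightarrow> real \<Rightarrow> ('a \<times> 'b) measure \<Rightarrow> bool" where
  "cyc_inv_coupling \<mu> \<nu> c \<epsilon> \<pi> \<longleftrightarrow> coupling \<mu> \<nu> \<pi>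
     \<and> absolutely_continuous (\<mu> \<Otimes>\<^sub>M \<nu>) \<pi> \<and> absolutely_continuous \<pi> (\<mu> \<Otimes>\<^sub>M \<nu>)
     \<and> (\<exists>f. f \<in> borel_measurable (\<mu> \<Otimes>\<^sub>M \<nu>) \<and> (\<forall>z. f z > 0)
          \<and> \<pi> = density (\<mu> \<Otimes>\<^sub>M \<nu>) (\<lambda>z. ennreal (f z))
          \<and> (\<forall>k::nat. k \<ge> 1 \<longrightarrow> (\<forall>(x::nat \<Rightarrow> 'a) (y::nat \<Rightarrow> 'b).
               (\<Prod>i<k. f (x i, y i)) =
               exp (- (1/\<epsilon>) * ((\<Sum>i<k. c (x i, y i)) - (\<Sum>i<k. c (x i, y (Suc i mod k)))))
               * (\<Prod>i<k. f (x i, y (Suc i mod k))))))"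

text \<open>The set A_k(delta,delta') of k-tuples, indices 0..k-1, y_k := y_0.\<close>
definition A_set :: "('a \<times> 'b \<Rightarrow> real) \<Rightarrow> nat \<Rightarrow> ereal \<Rightarrow> ereal \<Rightarrow> (nat \<Rightarrow> 'a \<times> 'b) set" where
  "A_set c k \<delta> \<delta>' = {z. \<delta> \<le> ereal ((\<Sum>i<k. c (z i)) - (\<Sum>i<k. c (fst (z i), snd (z (Suc i mod k)))))
      \<and> ereal ((\<Sum>i<k. c (z i)) - (\<Sum>i<k. c (fst (z i), snd (z (Suc i mod k))))) \<le> \<delta>'}"

definition shift_y :: "nat \<Rightarrow> (nat \<Rightarrow> 'a \<times> 'b) \<Rightarrow> (nat \<Rightarrow> 'a \<times> 'b)" where
  "shift_y k z = (\<lambda>i\<in>{..<k}. (fst (z i), snd (z (Suc i mod k))))"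

definition exp_neg_div :: "ereal \<Rightarrow> real \<Rightarrow> real" where
  "exp_neg_div \<delta> \<epsilon> = (if \<delta> = \<infinity> then 0 else exp (- real_of_ereal \<delta> / \<epsilon>))"

end

theory Submission
  imports Defs
begin

(* Write P = mu x nu, f = d pi_eps / dP and S z = (x_i, y_(i+1))_i.  The k-fold product pi_eps^k
   has density F z = prod_i f (z i) with respect to P^k, and cyclic invariance reads
   F z = exp (- Delta z / eps) * F (S z), where Delta is the cost gap defining A_k.  Since S only
   permutes the second coordinates, it preserves P^k; hence pi_eps^k (S A) is the integral of F o S
   over A while pi_eps^k A is the integral of exp (- Delta / eps) * (F o S) over A.  With
   delta <= Delta <= delta' on A this gives
     exp (- delta' / eps) * pi_eps^k (S A) <= pi_eps^k A <= exp (- delta / eps) * pi_eps^k (S A),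
   and the two claims follow from pi_eps^k (S A) <= 1 and by taking eps * log and the liminf. *)

lemma PiM_density:
  fixes M :: "'a measure" and g :: "'a \<Rightarrow> ennreal"
  assumes "finite I" "sigma_finite_measure M" "sigma_finite_measure (density M g)"
    and g: "g \<in> borel_measurable M"
  shows "PiM I (\<lambda>_. density M g) = density (PiM I (\<lambda>_. M)) (\<lambda>z. \<Prod>i\<in>I. g (z i))"
proof -
  interpret D: product_sigma_finite "\<lambda>_. density M g"
    using assms(3) by (simp add: product_sigma_finite_def)
  interpret P: product_sigma_finite "\<lambda>_. M"
    using assms(2) by (simp add: product_sigma_finite_def)
  show ?thesis
  proof (rule D.PiM_eqI[symmetric, OF \<open>finite I\<close>])
    fix A assume "\<And>i. i \<in> I \<Longrightarrow> A i \<in> sets (density M g)"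
    then have A: "\<And>i. i \<in> I \<Longrightarrow> A i \<in> sets M" by simp
    have "emeasure (density (PiM I (\<lambda>_. M)) (\<lambda>z. \<Prod>i\<in>I. g (z i))) (Pi\<^sub>E I A)
        = (\<integral>\<^sup>+z. (\<Prod>i\<in>I. g (z i)) * indicator (Pi\<^sub>E I A) z \<partial>PiM I (\<lambda>_. M))"
      using A g \<open>finite I\<close> by (intro emeasure_density) (auto intro!: sets_PiM_I_finite)
    also have "\<dots> = (\<integral>\<^sup>+z. (\<Prod>i\<in>I. g (z i) * indicator (A i) (z i)) \<partial>PiM I (\<lambda>_. M))"
      using \<open>finite I\<close> by (intro nn_integral_cong)
        (auto simp: prod.distrib indicator_def space_PiM PiE_iff)
    also have "\<dots> = (\<Prod>i\<in>I. \<integral>\<^sup>+x. g x * indicator (A i) x \<partial>M)"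
      using A g \<open>finite I\<close> by (intro P.product_nn_integral_prod) auto
    also have "\<dots> = (\<Prod>i\<in>I. emeasure (density M g) (A i))"
      using A g by (intro prod.cong refl) (simp add: emeasure_density)
    finally show "emeasure (density (PiM I (\<lambda>_. M)) (\<lambda>z. \<Prod>i\<in>I. g (z i))) (Pi\<^sub>E I A)
        = (\<Prod>i\<in>I. emeasure (density M g) (A i))" .
  qed (simp cong: sets_PiM_cong)
qed

lemma emeasure_density_image_measure_preserving:
  assumes S: "S \<in> measurable M M" and T: "T \<in> measurable M M" and "distr M M S = M"
    and TS: "\<And>z. z \<in> space M \<Longrightarrow> T (S z) = z" and ST: "\<And>z. z \<in> space M \<Longrightarrow> S (T z) = z"
    and F: "F \<in> borel_measurable M" and A: "A \<in> sets M"
  shows "emeasure (density M F) (S ` A) = (\<integral>\<^sup>+z. F (S z) * indicator A z \<partial>M)"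
proof -
  have A_space: "A \<subseteq> space M" using A by (rule sets.sets_into_space)
  have image_eq: "S ` A = T -` A \<inter> space M"
  proof
    show "S ` A \<subseteq> T -` A \<inter> space M"
      using A_space TS measurable_space[OF S] by auto
    show "T -` A \<inter> space M \<subseteq> S ` A"
      using ST by (auto intro!: image_eqI)
  qed
  have SA: "S ` A \<in> sets M"
    unfolding image_eq using T A by measurable
  have "emeasure (density M F) (S ` A) = (\<integral>\<^sup>+w. F w * indicator (S ` A) w \<partial>distr M M S)"
    using F SA by (simp add: emeasure_density \<open>distr M M S = M\<close>)
  also have "\<dots> = (\<integral>\<^sup>+z. F (S z) * indicator (S ` A) (S z) \<partial>M)"
    using F SA S by (intro nn_integral_distr) auto
  also have "\<dots> = (\<integral>\<^sup>+z. F (S z) * indicator A z \<partial>M)"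
    using TS A_space by (intro nn_integral_cong) (auto simp: indicator_def, metis subsetD)
  finally show ?thesis .
qed

definition permute_snd :: "('i \<Rightarrow> 'i) \<Rightarrow> 'i set \<Rightarrow> ('i \<Rightarrow> 'a \<times> 'b) \<Rightarrow> ('i \<Rightarrow> 'a \<times> 'b)" where
  "permute_snd h I z = (\<lambda>i\<in>I. (fst (z i), snd (z (h i))))"

lemma measurable_permute_snd:
  assumes "h \<in> I \<rightarrow> I"
  shows "permute_snd h I \<in> measurable (PiM I (\<lambda>_. M \<Otimes>\<^sub>M N)) (PiM I (\<lambda>_. M \<Otimes>\<^sub>M N))"
  unfolding permute_snd_def
proof (rule measurable_restrict)
  fix i assume "i \<in> I"
  with assms have "h i \<in> I" by blast
  with \<open>i \<in> I\<close> show "(\<lambda>z. (fst (z i), snd (z (h i)))) \<in> measurable (PiM I (\<lambda>_. M \<Otimes>\<^sub>M N)) (M \<Otimes>\<^sub>M N)"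
    by measurable
qed

lemma permute_snd_permute_snd:
  assumes "z \<in> extensional I" "g \<in> I \<rightarrow> I" "\<And>i. i \<in> I \<Longrightarrow> h (g i) = i"
  shows "permute_snd g I (permute_snd h I z) = z"
  using assms by (auto simp: permute_snd_def extensional_def fun_eq_iff)

lemma vimage_permute_snd_PiE_Times:
  fixes U :: "'i \<Rightarrow> 'a set" and V :: "'i \<Rightarrow> 'b set"
  assumes h: "bij_betw h I I" and U: "\<And>i. i \<in> I \<Longrightarrow> U i \<subseteq> S" and V: "\<And>i. i \<in> I \<Longrightarrow> V i \<subseteq> T"
  shows "permute_snd h I -` Pi\<^sub>E I (\<lambda>i. U i \<times> V i) \<inter> Pi\<^sub>E I (\<lambda>_. S \<times> T)
       = Pi\<^sub>E I (\<lambda>j. U j \<times> V (inv_into I h j))"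
proof (intro set_eqI)
  fix z :: "'i \<Rightarrow> 'a \<times> 'b"
  let ?g = "inv_into I h"
  have g: "?g j \<in> I" "h (?g j) = j" if "j \<in> I" for j
    using that bij_betw_apply[OF bij_betw_inv_into[OF h]] bij_betw_inv_into_right[OF h] by auto
  have "(\<forall>i\<in>I. snd (z (h i)) \<in> V i) \<longleftrightarrow> (\<forall>j\<in>I. snd (z j) \<in> V (?g j))"
  proof
    assume "\<forall>i\<in>I. snd (z (h i)) \<in> V i"
    then show "\<forall>j\<in>I. snd (z j) \<in> V (?g j)"
      using g by metis
  next
    assume "\<forall>j\<in>I. snd (z j) \<in> V (?g j)"
    then show "\<forall>i\<in>I. snd (z (h i)) \<in> V i"
      using bij_betw_apply[OF h] bij_betw_inv_into_left[OF h] by metis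
  qed
  moreover have "(\<forall>j\<in>I. fst (z j) \<in> U j \<and> snd (z j) \<in> V (?g j)) \<Longrightarrow> (\<forall>j\<in>I. z j \<in> S \<times> T)"
    using U V g by (fastforce simp: mem_Times_iff)
  ultimately show "z \<in> permute_snd h I -` Pi\<^sub>E I (\<lambda>i. U i \<times> V i) \<inter> Pi\<^sub>E I (\<lambda>_. S \<times> T)
      \<longleftrightarrow> z \<in> Pi\<^sub>E I (\<lambda>j. U j \<times> V (?g j))"
    by (simp add: permute_snd_def PiE_iff mem_Times_iff) blast
qed

lemma sets_PiM_pair_measure_boxes:
  assumes "finite I"
  shows "sets (PiM I (\<lambda>_. M \<Otimes>\<^sub>M N)) = sigma_sets (Pi\<^sub>E I (\<lambda>_. space M \<times> space N))
    {Pi\<^sub>E I (\<lambda>i. U i \<times> V i) | U V. \<forall>i\<in>I. U i \<in> sets M \<and> V i \<in> sets N}"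
proof -
  let ?\<Omega> = "space M \<times> space N"
  let ?E = "{a \<times> b | a b. a \<in> sets M \<and> b \<in> sets N}"
  let ?P = "{{f\<in>Pi\<^sub>E I (\<lambda>_. ?\<Omega>). \<forall>i\<in>j. f i \<in> A i} | A j. j \<in> {I} \<and> A \<in> Pi j (\<lambda>_. ?E)}"
  have box_subset: "U \<times> V \<subseteq> ?\<Omega>" if "U \<in> sets M" "V \<in> sets N" for U V
    using that sets.sets_into_space by (metis Sigma_mono)
  have PiE_restrict: "{f\<in>Pi\<^sub>E I (\<lambda>_. ?\<Omega>). \<forall>i\<in>I. f i \<in> B i} = Pi\<^sub>E I B"
    if "\<And>i. i \<in> I \<Longrightarrow> B i \<subseteq> ?\<Omega>" for B
    using that unfolding PiE_def Pi_def by blast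
  have PiE_boxes: "{f\<in>Pi\<^sub>E I (\<lambda>_. ?\<Omega>). \<forall>i\<in>I. f i \<in> U i \<times> V i} = Pi\<^sub>E I (\<lambda>i. U i \<times> V i)"
    if "\<forall>i\<in>I. U i \<in> sets M \<and> V i \<in> sets N" for U V
    using that box_subset by (intro PiE_restrict) blast
  have E: "?E \<subseteq> Pow ?\<Omega>"
    using box_subset by blast
  have "sets (PiM I (\<lambda>_. M \<Otimes>\<^sub>M N)) = sets (PiM I (\<lambda>_. sigma ?\<Omega> ?E))"
    using E by (intro sets_PiM_cong) (simp_all add: sets_pair_measure)
  also have "\<dots> = sets (sigma (Pi\<^sub>E I (\<lambda>_. ?\<Omega>)) ?P)"
  proof (rule sets_PiM_sigma)
    have "?\<Omega> \<in> ?E" by blast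
    then show "\<exists>S\<subseteq>?E. countable S \<and> ?\<Omega> = \<Union>S" for i
      by (intro exI[of _ "{?\<Omega>}"]) simp
  qed (use E \<open>finite I\<close> in simp_all)
  also have "\<dots> = sigma_sets (Pi\<^sub>E I (\<lambda>_. ?\<Omega>)) ?P"
    by (rule sets_measure_of) blast
  also have "?P = {Pi\<^sub>E I (\<lambda>i. U i \<times> V i) | U V. \<forall>i\<in>I. U i \<in> sets M \<and> V i \<in> sets N}"
  proof (intro equalityI subsetI)
    fix X assume "X \<in> ?P"
    then obtain A where A: "A \<in> Pi I (\<lambda>_. ?E)" and X: "X = {f\<in>Pi\<^sub>E I (\<lambda>_. ?\<Omega>). \<forall>i\<in>I. f i \<in> A i}"
      by blast
    have "\<forall>i\<in>I. \<exists>a b. A i = a \<times> b \<and> a \<in> sets M \<and> b \<in> sets N"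
      using A by blast
    then obtain U V where UV: "\<forall>i\<in>I. A i = U i \<times> V i \<and> U i \<in> sets M \<and> V i \<in> sets N"
      by metis
    have "X = Pi\<^sub>E I (\<lambda>i. U i \<times> V i)"
      unfolding X using UV PiE_boxes[of U V] by simp
    with UV show "X \<in> {Pi\<^sub>E I (\<lambda>i. U i \<times> V i) | U V. \<forall>i\<in>I. U i \<in> sets M \<and> V i \<in> sets N}"
      by blast
  next
    fix X assume "X \<in> {Pi\<^sub>E I (\<lambda>i. U i \<times> V i) | U V. \<forall>i\<in>I. U i \<in> sets M \<and> V i \<in> sets N}"
    then obtain U V where UV: "\<forall>i\<in>I. U i \<in> sets M \<and> V i \<in> sets N" and X: "X = Pi\<^sub>E I (\<lambda>i. U i \<times> V i)"
      by blast
    have "X = {f\<in>Pi\<^sub>E I (\<lambda>_. ?\<Omega>). \<forall>i\<in>I. f i \<in> U i \<times> V i}"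
      unfolding X using PiE_boxes[OF UV] by simp
    moreover have "(\<lambda>i. U i \<times> V i) \<in> Pi I (\<lambda>_. ?E)"
      using UV by blast
    ultimately show "X \<in> ?P"
      by (intro CollectI exI[of _ "\<lambda>i. U i \<times> V i"] exI[of _ I]) simp
  qed
  finally show ?thesis .
qed

lemma distr_permute_snd:
  assumes M: "prob_space M" and N: "prob_space N" and "finite I" and h: "bij_betw h I I"
  shows "distr (PiM I (\<lambda>_. M \<Otimes>\<^sub>M N)) (PiM I (\<lambda>_. M \<Otimes>\<^sub>M N)) (permute_snd h I) = PiM I (\<lambda>_. M \<Otimes>\<^sub>M N)"
proof -
  let ?P = "M \<Otimes>\<^sub>M N"
  let ?Pk = "PiM I (\<lambda>_. ?P)"
  let ?\<Omega> = "Pi\<^sub>E I (\<lambda>_. space M \<times> space N)"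
  let ?G = "{Pi\<^sub>E I (\<lambda>i. U i \<times> V i) | U V. \<forall>i\<in>I. U i \<in> sets M \<and> V i \<in> sets N}"
  have P: "prob_space ?P" by (rule prob_space_pair[OF M N])
  interpret Pk: prob_space ?Pk by (rule prob_space_PiM) (use P in auto)
  interpret P: product_sigma_finite "\<lambda>_. ?P"
    using P by (simp add: product_sigma_finite_def prob_space_imp_sigma_finite)
  interpret N: prob_space N by (rule N)
  have meas: "permute_snd h I \<in> measurable ?Pk ?Pk"
    using h by (intro measurable_permute_snd) (auto simp: bij_betw_def)
  have sets: "sets ?Pk = sigma_sets ?\<Omega> ?G"
    by (rule sets_PiM_pair_measure_boxes[OF \<open>finite I\<close>])
  have space: "space ?Pk = ?\<Omega>" by (simp add: space_PiM space_pair_measure)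
  have G_sets: "?G \<subseteq> sets ?Pk"
    unfolding sets by (rule sigma_sets_superset_generator)
  have inv_h: "bij_betw (inv_into I h) I I" by (rule bij_betw_inv_into[OF h])
  txt \<open>The generator of sets_PiM (products of arbitrary sets of M x N) is not mapped to
    products by permute_snd, so one works with boxes of rectangles instead.\<close>
  show ?thesis
  proof (rule measure_eqI_generator_eq[where E="?G" and \<Omega>="?\<Omega>" and A="\<lambda>_. ?\<Omega>"])
    show "Int_stable ?G"
    proof (rule Int_stableI)
      fix a b assume "a \<in> ?G" "b \<in> ?G"
      then obtain U V U' V' where "\<forall>i\<in>I. U i \<in> sets M \<and> V i \<in> sets N" "a = Pi\<^sub>E I (\<lambda>i. U i \<times> V i)"
        "\<forall>i\<in>I. U' i \<in> sets M \<and> V' i \<in> sets N" "b = Pi\<^sub>E I (\<lambda>i. U' i \<times> V' i)"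
        by blast
      then show "a \<inter> b \<in> ?G"
        by (intro CollectI exI[of _ "\<lambda>i. U i \<inter> U' i"] exI[of _ "\<lambda>i. V i \<inter> V' i"])
          (auto simp: PiE_Int Times_Int_Times)
    qed
    show "?G \<subseteq> Pow ?\<Omega>"
      using G_sets sets.space_closed[of ?Pk] space by blast
    show "sets (distr ?Pk ?Pk (permute_snd h I)) = sigma_sets ?\<Omega> ?G" "sets ?Pk = sigma_sets ?\<Omega> ?G"
      using sets by simp_all
    have "?\<Omega> \<in> ?G"
      by (intro CollectI exI[of _ "\<lambda>_. space M"] exI[of _ "\<lambda>_. space N"]) simp
    then show "range (\<lambda>_. ?\<Omega>) \<subseteq> ?G" by blast
    show "(\<Union>i::nat. ?\<Omega>) = ?\<Omega>" by simp
    show "emeasure (distr ?Pk ?Pk (permute_snd h I)) ?\<Omega> \<noteq> \<infinity>"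
      using prob_space.emeasure_space_1[OF Pk.prob_space_distr[OF meas]] space by simp
    fix X assume "X \<in> ?G"
    with G_sets have "X \<in> sets ?Pk" by blast
    from \<open>X \<in> ?G\<close> obtain U V where UV: "\<forall>i\<in>I. U i \<in> sets M \<and> V i \<in> sets N" and X: "X = Pi\<^sub>E I (\<lambda>i. U i \<times> V i)"
      by blast
    have "emeasure (distr ?Pk ?Pk (permute_snd h I)) X = emeasure ?Pk (permute_snd h I -` X \<inter> space ?Pk)"
      using meas \<open>X \<in> sets ?Pk\<close> by (rule emeasure_distr)
    also have "permute_snd h I -` X \<inter> space ?Pk = Pi\<^sub>E I (\<lambda>j. U j \<times> V (inv_into I h j))"
      unfolding space X using UV by (intro vimage_permute_snd_PiE_Times[OF h]) (simp_all add: sets.sets_into_space)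
    also have "emeasure ?Pk \<dots> = (\<Prod>j\<in>I. emeasure M (U j) * emeasure N (V (inv_into I h j)))"
      using UV bij_betw_apply[OF inv_h] \<open>finite I\<close>
      by (simp add: P.emeasure_PiM N.emeasure_pair_measure_Times)
    also have "\<dots> = (\<Prod>j\<in>I. emeasure M (U j)) * (\<Prod>j\<in>I. emeasure N (V j))"
      by (simp add: prod.distrib prod.reindex_bij_betw[OF inv_h, of "\<lambda>j. emeasure N (V j)"])
    also have "\<dots> = emeasure ?Pk X"
      using UV \<open>finite I\<close> by (simp add: X P.emeasure_PiM N.emeasure_pair_measure_Times prod.distrib)
    finally show "emeasure (distr ?Pk ?Pk (permute_snd h I)) X = emeasure ?Pk X" .
  qed
qed

lemma emeasure_density_image_permute_snd:
  assumes "prob_space M" "prob_space N" "finite I" and h: "bij_betw h I I"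
    and F: "F \<in> borel_measurable (PiM I (\<lambda>_. M \<Otimes>\<^sub>M N))" and A: "A \<in> sets (PiM I (\<lambda>_. M \<Otimes>\<^sub>M N))"
  shows "emeasure (density (PiM I (\<lambda>_. M \<Otimes>\<^sub>M N)) F) (permute_snd h I ` A)
        = (\<integral>\<^sup>+z. F (permute_snd h I z) * indicator A z \<partial>PiM I (\<lambda>_. M \<Otimes>\<^sub>M N))"
proof -
  let ?g = "inv_into I h"
  have maps: "h \<in> I \<rightarrow> I" "?g \<in> I \<rightarrow> I"
    using bij_betw_apply[OF h] bij_betw_apply[OF bij_betw_inv_into[OF h]] by auto
  note preserving = emeasure_density_image_measure_preserving
    [OF measurable_permute_snd[OF maps(1)] measurable_permute_snd[OF maps(2)]
        distr_permute_snd[OF assms(1-4)] _ _ F A]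
  have "permute_snd ?g I (permute_snd h I z) = z" "permute_snd h I (permute_snd ?g I z) = z"
    if "z \<in> space (PiM I (\<lambda>_. M \<Otimes>\<^sub>M N))" for z
    using that maps bij_betw_inv_into_left[OF h] bij_betw_inv_into_right[OF h]
    by (auto intro!: permute_snd_permute_snd simp: space_PiM PiE_iff)
  then show ?thesis
    by (rule preserving)
qed

lemma shift_y_eq_permute_snd: "shift_y k = permute_snd (\<lambda>i. Suc i mod k) {..<k}"
  by (simp add: fun_eq_iff shift_y_def permute_snd_def)

lemma bij_betw_Suc_mod: "0 < k \<Longrightarrow> bij_betw (\<lambda>i. Suc i mod k) {..<k} {..<k}"
proof -
  assume "0 < k"
  have "inj_on (\<lambda>i. Suc i mod k) {..<k}"
    by (auto simp: inj_on_def mod_if split: if_splits)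
  moreover have "(\<lambda>i. Suc i mod k) ` {..<k} \<subseteq> {..<k}"
    using \<open>0 < k\<close> by auto
  ultimately show ?thesis
    by (simp add: bij_betw_def endo_inj_surj)
qed

definition cyclic_cost_gap :: "('a \<times> 'b \<Rightarrow> real) \<Rightarrow> nat \<Rightarrow> (nat \<Rightarrow> 'a \<times> 'b) \<Rightarrow> real" where
  "cyclic_cost_gap c k z = (\<Sum>i<k. c (z i)) - (\<Sum>i<k. c (fst (z i), snd (z (Suc i mod k))))"

lemma A_set_eq: "A_set c k \<delta> \<delta>' = {z. \<delta> \<le> ereal (cyclic_cost_gap c k z) \<and> ereal (cyclic_cost_gap c k z) \<le> \<delta>'}"
  by (simp add: A_set_def cyclic_cost_gap_def)

lemma prod_density_shift_y:
  assumes cyclic: "\<And>x y. (\<Prod>i<k. f (x i, y i)) =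
      exp (- (1/\<epsilon>) * ((\<Sum>i<k. c (x i, y i)) - (\<Sum>i<k. c (x i, y (Suc i mod k)))))
      * (\<Prod>i<k. f (x i, y (Suc i mod k)))"
    and f_nonneg: "\<And>z. 0 \<le> f z"
  shows "(\<Prod>i<k. ennreal (f (z i)))
    = ennreal (exp (- cyclic_cost_gap c k z / \<epsilon>)) * (\<Prod>i<k. ennreal (f (shift_y k z i)))"
proof -
  have "(\<Prod>i<k. f (z i)) = exp (- (1/\<epsilon>) * cyclic_cost_gap c k z) * (\<Prod>i<k. f (shift_y k z i))"
    using cyclic[of "\<lambda>i. fst (z i)" "\<lambda>i. snd (z i)"]
    unfolding cyclic_cost_gap_def shift_y_def by simp
  then show ?thesis
    using f_nonneg by (simp add: prod_ennreal ennreal_mult' prod_nonneg)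
qed

lemma prob_space_coupling:
  assumes "coupling \<mu> \<nu> \<pi>" "prob_space \<mu>"
  shows "prob_space \<pi>"
proof (rule prob_space_distrD)
  have sets_\<pi>: "sets \<pi> = sets (\<mu> \<Otimes>\<^sub>M \<nu>)"
    using assms(1) unfolding coupling_def by blast
  show "fst \<in> measurable \<pi> \<mu>"
    unfolding measurable_cong_sets[OF sets_\<pi> refl] by (rule measurable_fst)
  show "prob_space (distr \<pi> \<mu> fst)"
    using assms unfolding coupling_def by simp
qed

lemma prob_space_cyc_inv_coupling:
  "cyc_inv_coupling \<mu> \<nu> c \<epsilon> \<pi> \<Longrightarrow> prob_space \<mu> \<Longrightarrow> prob_space \<pi>"
  unfolding cyc_inv_coupling_def by (blast intro: prob_space_coupling)

lemma cyc_inv_coupling_density: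
  assumes "cyc_inv_coupling \<mu> \<nu> c \<epsilon> \<pi>" "0 < k"
  obtains f where "f \<in> borel_measurable (\<mu> \<Otimes>\<^sub>M \<nu>)" "\<And>z. 0 < f z"
    "\<pi> = density (\<mu> \<Otimes>\<^sub>M \<nu>) (\<lambda>z. ennreal (f z))"
    "\<And>x y. (\<Prod>i<k. f (x i, y i)) =
      exp (- (1/\<epsilon>) * ((\<Sum>i<k. c (x i, y i)) - (\<Sum>i<k. c (x i, y (Suc i mod k)))))
      * (\<Prod>i<k. f (x i, y (Suc i mod k)))"
proof -
  obtain f where f: "f \<in> borel_measurable (\<mu> \<Otimes>\<^sub>M \<nu>)" "\<And>z. 0 < f z"
    "\<pi> = density (\<mu> \<Otimes>\<^sub>M \<nu>) (\<lambda>z. ennreal (f z))"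
    and cyclic_all: "\<forall>k::nat. k \<ge> 1 \<longrightarrow> (\<forall>x y.
      (\<Prod>i<k. f (x i, y i)) =
      exp (- (1/\<epsilon>) * ((\<Sum>i<k. c (x i, y i)) - (\<Sum>i<k. c (x i, y (Suc i mod k)))))
      * (\<Prod>i<k. f (x i, y (Suc i mod k))))"
    using assms(1) unfolding cyc_inv_coupling_def by blast
  have "(\<Prod>i<k. f (x i, y i)) =
      exp (- (1/\<epsilon>) * ((\<Sum>i<k. c (x i, y i)) - (\<Sum>i<k. c (x i, y (Suc i mod k)))))
      * (\<Prod>i<k. f (x i, y (Suc i mod k)))" for x y
    by (rule cyclic_all[rule_format]) (use \<open>0 < k\<close> in simp)
  with f show thesis by (rule that)
qed

lemma emeasure_PiM_cyc_inv_coupling: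
  assumes \<mu>: "prob_space \<mu>" and \<nu>: "prob_space \<nu>" and ci: "cyc_inv_coupling \<mu> \<nu> c \<epsilon> \<pi>"
    and "0 < k" and A: "A \<in> sets (PiM {..<k} (\<lambda>_. \<mu> \<Otimes>\<^sub>M \<nu>))"
  obtains G where "G \<in> borel_measurable (PiM {..<k} (\<lambda>_. \<mu> \<Otimes>\<^sub>M \<nu>))" and "\<And>z. z \<notin> A \<Longrightarrow> G z = 0"
    and "emeasure (PiM {..<k} (\<lambda>_. \<pi>)) A
      = (\<integral>\<^sup>+z. ennreal (exp (- cyclic_cost_gap c k z / \<epsilon>)) * G z \<partial>PiM {..<k} (\<lambda>_. \<mu> \<Otimes>\<^sub>M \<nu>))"
    and "emeasure (PiM {..<k} (\<lambda>_. \<pi>)) (shift_y k ` A) = (\<integral>\<^sup>+z. G z \<partial>PiM {..<k} (\<lambda>_. \<mu> \<Otimes>\<^sub>M \<nu>))"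
proof -
  let ?P = "\<mu> \<Otimes>\<^sub>M \<nu>"
  let ?Pk = "PiM {..<k} (\<lambda>_. ?P)"
  let ?S = "shift_y k"
  obtain f where f: "f \<in> borel_measurable ?P" and f_pos: "\<And>z. 0 < f z"
    and \<pi>: "\<pi> = density ?P (\<lambda>z. ennreal (f z))"
    and cyclic: "\<And>x y. (\<Prod>i<k. f (x i, y i)) =
      exp (- (1/\<epsilon>) * ((\<Sum>i<k. c (x i, y i)) - (\<Sum>i<k. c (x i, y (Suc i mod k)))))
      * (\<Prod>i<k. f (x i, y (Suc i mod k)))"
    using cyc_inv_coupling_density[OF ci \<open>0 < k\<close>] by blast
  define F where "F z = (\<Prod>i<k. ennreal (f (z i)))" for z
  note f[measurable]
  have F[measurable]: "F \<in> borel_measurable ?Pk"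
    unfolding F_def by measurable
  have F_shift: "F z = ennreal (exp (- cyclic_cost_gap c k z / \<epsilon>)) * F (?S z)" for z
    unfolding F_def using f_pos
    by (intro prod_density_shift_y[where f=f and c=c and \<epsilon>=\<epsilon> and k=k]) (rule cyclic, simp add: less_imp_le)
  have "prob_space \<pi>"
    using ci \<mu> by (rule prob_space_cyc_inv_coupling)
  then have \<pi>k: "PiM {..<k} (\<lambda>_. \<pi>) = density ?Pk F"
    unfolding F_def \<pi> using f prob_space_pair[OF \<mu> \<nu>]
    by (intro PiM_density) (auto intro: prob_space_imp_sigma_finite)
  have S: "bij_betw (\<lambda>i. Suc i mod k) {..<k} {..<k}"
    using \<open>0 < k\<close> by (rule bij_betw_Suc_mod)
  have S_meas[measurable]: "?S \<in> measurable ?Pk ?Pk"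
    unfolding shift_y_eq_permute_snd using bij_betw_apply[OF S] by (intro measurable_permute_snd) auto
  show thesis
  proof (rule that[of "\<lambda>z. F (?S z) * indicator A z"])
    show "(\<lambda>z. F (?S z) * indicator A z) \<in> borel_measurable ?Pk"
      using A by (intro borel_measurable_times_ennreal measurable_compose[OF S_meas F] borel_measurable_indicator)
    show "F (?S z) * indicator A z = 0" if "z \<notin> A" for z
      using that by simp
    have "emeasure (PiM {..<k} (\<lambda>_. \<pi>)) A = (\<integral>\<^sup>+z. F z * indicator A z \<partial>?Pk)"
      unfolding \<pi>k using F A by (rule emeasure_density)
    also have "\<dots> = (\<integral>\<^sup>+z. ennreal (exp (- cyclic_cost_gap c k z / \<epsilon>)) * (F (?S z) * indicator A z) \<partial>?Pk)"
      by (intro nn_integral_cong) (subst F_shift, simp only: mult.assoc)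
    finally show "emeasure (PiM {..<k} (\<lambda>_. \<pi>)) A = \<dots>" .
    show "emeasure (PiM {..<k} (\<lambda>_. \<pi>)) (?S ` A) = (\<integral>\<^sup>+z. F (?S z) * indicator A z \<partial>?Pk)"
      unfolding \<pi>k shift_y_eq_permute_snd by (rule emeasure_density_image_permute_snd[OF \<mu> \<nu> _ S F A]) simp
  qed
qed

lemma scaled_elog_exp_mult_le:
  assumes "0 < \<epsilon>" "0 \<le> b" and le: "exp (- d / \<epsilon>) * b \<le> a"
  shows "ereal \<epsilon> * elog b - ereal d \<le> ereal \<epsilon> * elog a"
proof (cases "b = 0")
  case True
  then show ?thesis using \<open>0 < \<epsilon>\<close> by (simp add: elog_def)
next
  case False
  with \<open>0 \<le> b\<close> have "0 < b" by simp
  then have pos: "0 < exp (- d / \<epsilon>) * b" by simp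
  then have "0 < a" using le by linarith
  have "ln (exp (- d / \<epsilon>) * b) \<le> ln a"
    using le pos by simp
  then have "- d / \<epsilon> + ln b \<le> ln a"
    using \<open>0 < b\<close> by (simp add: ln_mult)
  then have "\<epsilon> * ln b - d \<le> \<epsilon> * ln a"
    using \<open>0 < \<epsilon>\<close> by (simp add: field_simps)
  then show ?thesis
    using \<open>0 < b\<close> \<open>0 < a\<close> by (simp add: elog_def)
qed

lemma Liminf_scaled_elog_ge:
  fixes a b :: "real \<Rightarrow> real"
  assumes le: "\<And>\<epsilon>. 0 < \<epsilon> \<Longrightarrow> exp (- d / \<epsilon>) * b \<epsilon> \<le> a \<epsilon>" and b: "\<And>\<epsilon>. 0 \<le> b \<epsilon>"
  shows "Liminf (at_right 0) (\<lambda>\<epsilon>. ereal \<epsilon> * elog (b \<epsilon>)) - ereal d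
    \<le> Liminf (at_right 0) (\<lambda>\<epsilon>. ereal \<epsilon> * elog (a \<epsilon>))"
proof -
  have "Liminf (at_right 0) (\<lambda>\<epsilon>. ereal \<epsilon> * elog (b \<epsilon>)) - ereal d
      = Liminf (at_right (0::real)) (\<lambda>\<epsilon>. ereal \<epsilon> * elog (b \<epsilon>) - ereal d)"
    unfolding minus_ereal_def by (rule Liminf_add_ereal_right[symmetric]) simp_all
  also have "\<dots> \<le> Liminf (at_right 0) (\<lambda>\<epsilon>. ereal \<epsilon> * elog (a \<epsilon>))"
  proof (rule Liminf_mono)
    show "\<forall>\<^sub>F \<epsilon> in at_right 0. ereal \<epsilon> * elog (b \<epsilon>) - ereal d \<le> ereal \<epsilon> * elog (a \<epsilon>)"
      using eventually_at_right_less[of "0::real"]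
      by eventually_elim (blast intro: scaled_elog_exp_mult_le b le)
  qed
  finally show ?thesis .
qed

lemma
  assumes \<mu>: "prob_space \<mu>" and \<nu>: "prob_space \<nu>" and ci: "cyc_inv_coupling \<mu> \<nu> c \<epsilon> \<pi>"
    and "0 < \<epsilon>" "0 < k" and A: "A \<in> sets (PiM {..<k} (\<lambda>_. \<mu> \<Otimes>\<^sub>M \<nu>))"
  shows measure_PiM_cyc_inv_coupling_le:
      "(\<And>z. z \<in> A \<Longrightarrow> t \<le> cyclic_cost_gap c k z) \<Longrightarrow>
        measure (PiM {..<k} (\<lambda>_. \<pi>)) A \<le> exp (- t / \<epsilon>) * measure (PiM {..<k} (\<lambda>_. \<pi>)) (shift_y k ` A)"
    and measure_PiM_cyc_inv_coupling_ge:
      "(\<And>z. z \<in> A \<Longrightarrow> cyclic_cost_gap c k z \<le> t) \<Longrightarrow>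
        exp (- t / \<epsilon>) * measure (PiM {..<k} (\<lambda>_. \<pi>)) (shift_y k ` A) \<le> measure (PiM {..<k} (\<lambda>_. \<pi>)) A"
proof -
  let ?Pk = "PiM {..<k} (\<lambda>_. \<mu> \<Otimes>\<^sub>M \<nu>)"
  let ?\<Pi>k = "PiM {..<k} (\<lambda>_. \<pi>)"
  obtain G where G: "G \<in> borel_measurable ?Pk" and G_out: "\<And>z. z \<notin> A \<Longrightarrow> G z = 0"
    and \<Pi>k_A: "emeasure ?\<Pi>k A = (\<integral>\<^sup>+z. ennreal (exp (- cyclic_cost_gap c k z / \<epsilon>)) * G z \<partial>?Pk)"
    and \<Pi>k_SA: "emeasure ?\<Pi>k (shift_y k ` A) = (\<integral>\<^sup>+z. G z \<partial>?Pk)"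
    using emeasure_PiM_cyc_inv_coupling[OF \<mu> \<nu> ci \<open>0 < k\<close> A] by blast
  have "prob_space \<pi>"
    using ci \<mu> by (rule prob_space_cyc_inv_coupling)
  then interpret \<Pi>k: prob_space ?\<Pi>k
    by (intro prob_space_PiM) simp
  have exp_le: "exp (- s / \<epsilon>) \<le> exp (- t / \<epsilon>)" if "t \<le> s" for s t
    using that \<open>0 < \<epsilon>\<close> by (simp add: divide_le_cancel)
  have weighted: "(\<integral>\<^sup>+z. ennreal (exp (- t / \<epsilon>)) * G z \<partial>?Pk) = ennreal (exp (- t / \<epsilon>) * measure ?\<Pi>k (shift_y k ` A))"
    using G by (simp add: nn_integral_cmult \<Pi>k_SA[symmetric] \<Pi>k.emeasure_eq_measure ennreal_mult')
  show "measure ?\<Pi>k A \<le> exp (- t / \<epsilon>) * measure ?\<Pi>k (shift_y k ` A)"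
    if "\<And>z. z \<in> A \<Longrightarrow> t \<le> cyclic_cost_gap c k z"
  proof -
    have "emeasure ?\<Pi>k A \<le> (\<integral>\<^sup>+z. ennreal (exp (- t / \<epsilon>)) * G z \<partial>?Pk)"
      unfolding \<Pi>k_A using that G_out
      by (intro nn_integral_mono) (metis ennreal_leI exp_le mult_right_mono mult_zero_right zero_le)
    then show ?thesis
      unfolding weighted \<Pi>k.emeasure_eq_measure by simp
  qed
  show "exp (- t / \<epsilon>) * measure ?\<Pi>k (shift_y k ` A) \<le> measure ?\<Pi>k A"
    if "\<And>z. z \<in> A \<Longrightarrow> cyclic_cost_gap c k z \<le> t"
  proof -
    have "(\<integral>\<^sup>+z. ennreal (exp (- t / \<epsilon>)) * G z \<partial>?Pk) \<le> emeasure ?\<Pi>k A"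
      unfolding \<Pi>k_A using that G_out
      by (intro nn_integral_mono) (metis ennreal_leI exp_le mult_right_mono mult_zero_right zero_le)
    then show ?thesis
      unfolding weighted \<Pi>k.emeasure_eq_measure by simp
  qed
qed

lemma measure_PiM_cyc_inv_coupling_le_exp_neg_div:
  assumes \<mu>: "prob_space \<mu>" and \<nu>: "prob_space \<nu>" and ci: "cyc_inv_coupling \<mu> \<nu> c \<epsilon> \<pi>"
    and "0 < \<epsilon>" "0 < k" and A: "A \<in> sets (PiM {..<k} (\<lambda>_. \<mu> \<Otimes>\<^sub>M \<nu>))"
    and gap: "\<And>z. z \<in> A \<Longrightarrow> \<delta> \<le> ereal (cyclic_cost_gap c k z)" and "0 \<le> \<delta>"
  shows "measure (PiM {..<k} (\<lambda>_. \<pi>)) A \<le> exp_neg_div \<delta> \<epsilon>"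
proof (cases \<delta>)
  case (real d)
  interpret \<Pi>k: prob_space "PiM {..<k} (\<lambda>_. \<pi>)"
    using prob_space_cyc_inv_coupling[OF ci \<mu>] by (intro prob_space_PiM) simp
  have "measure (PiM {..<k} (\<lambda>_. \<pi>)) A \<le> exp (- d / \<epsilon>) * measure (PiM {..<k} (\<lambda>_. \<pi>)) (shift_y k ` A)"
    using gap real by (intro measure_PiM_cyc_inv_coupling_le[OF \<mu> \<nu> ci \<open>0 < \<epsilon>\<close> \<open>0 < k\<close> A]) simp
  also have "\<dots> \<le> exp (- d / \<epsilon>)"
    using \<Pi>k.prob_le_1 by (simp add: mult_left_le)
  finally show ?thesis by (simp add: exp_neg_div_def real)
next
  case PInf
  then have "A = {}" using gap by force
  then show ?thesis by (simp add: exp_neg_div_def PInf)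
qed (use \<open>0 \<le> \<delta>\<close> in simp)

lemma Liminf_elog_measure_PiM_cyc_inv_coupling_ge:
  assumes \<mu>: "prob_space \<mu>" and \<nu>: "prob_space \<nu>"
    and ci: "\<And>\<epsilon>. 0 < \<epsilon> \<Longrightarrow> cyc_inv_coupling \<mu> \<nu> c \<epsilon> (\<pi> \<epsilon>)"
    and "0 < k" and A: "A \<in> sets (PiM {..<k} (\<lambda>_. \<mu> \<Otimes>\<^sub>M \<nu>))"
    and gap: "\<And>z. z \<in> A \<Longrightarrow> ereal (cyclic_cost_gap c k z) \<le> \<delta>'" and "0 \<le> \<delta>'"
    and shifted: "Liminf (at_right 0) (\<lambda>\<epsilon>. ereal \<epsilon> * elog (measure (PiM {..<k} (\<lambda>_. \<pi> \<epsilon>)) (shift_y k ` A))) = 0"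
  shows "- \<delta>' \<le> Liminf (at_right 0) (\<lambda>\<epsilon>. ereal \<epsilon> * elog (measure (PiM {..<k} (\<lambda>_. \<pi> \<epsilon>)) A))"
proof (cases \<delta>')
  case (real d')
  have "Liminf (at_right 0) (\<lambda>\<epsilon>. ereal \<epsilon> * elog (measure (PiM {..<k} (\<lambda>_. \<pi> \<epsilon>)) (shift_y k ` A))) - ereal d'
      \<le> Liminf (at_right 0) (\<lambda>\<epsilon>. ereal \<epsilon> * elog (measure (PiM {..<k} (\<lambda>_. \<pi> \<epsilon>)) A))"
    using gap real
    by (intro Liminf_scaled_elog_ge measure_PiM_cyc_inv_coupling_ge[OF \<mu> \<nu> ci _ \<open>0 < k\<close> A]) simp_all
  with shifted real show ?thesis by simp
qed (use \<open>0 \<le> \<delta>'\<close> in simp_all)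

theorem lemma3p1:
  fixes \<mu> :: "'a::polish_space measure" and \<nu> :: "'b::polish_space measure"
    and c :: "'a \<times> 'b \<Rightarrow> real" and \<pi> :: "real \<Rightarrow> ('a \<times> 'b) measure"
    and k :: nat and \<delta> \<delta>' :: ereal and A :: "(nat \<Rightarrow> 'a \<times> 'b) set"
  assumes "prob_space \<mu>" "sets \<mu> = sets borel"
    and "prob_space \<nu>" "sets \<nu> = sets borel"
    and "c \<in> borel_measurable borel" "\<And>z. c z \<ge> 0"
    and "\<And>\<epsilon>. \<epsilon> > 0 \<Longrightarrow> cyc_inv_coupling \<mu> \<nu> c \<epsilon> (\<pi> \<epsilon>)"
    and "k \<ge> 2" "0 \<le> \<delta>" "\<delta> \<le> \<delta>'"
    and "A \<in> sets (PiM {..<k} (\<lambda>_. (borel :: ('a \<times> 'b) measure)))"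
    and "A \<subseteq> A_set c k \<delta> \<delta>'"
  shows "(\<forall>\<epsilon>>0. measure (PiM {..<k} (\<lambda>_. \<pi> \<epsilon>)) A \<le> exp_neg_div \<delta> \<epsilon>)
    \<and> (Liminf (at_right 0) (\<lambda>\<epsilon>. ereal \<epsilon> * elog (measure (PiM {..<k} (\<lambda>_. \<pi> \<epsilon>)) (shift_y k ` A))) = 0
       \<longrightarrow> Liminf (at_right 0) (\<lambda>\<epsilon>. ereal \<epsilon> * elog (measure (PiM {..<k} (\<lambda>_. \<pi> \<epsilon>)) A)) \<ge> - \<delta>')"
proof -
  have "0 < k" using \<open>k \<ge> 2\<close> by simp
  have "sets (\<mu> \<Otimes>\<^sub>M \<nu>) = sets (borel :: ('a \<times> 'b) measure)"
    unfolding borel_prod[symmetric] using assms(2,4) by (rule sets_pair_measure_cong)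
  then have A: "A \<in> sets (PiM {..<k} (\<lambda>_. \<mu> \<Otimes>\<^sub>M \<nu>))"
    using assms(11) sets_PiM_cong[of "{..<k}" "{..<k}" "\<lambda>_. \<mu> \<Otimes>\<^sub>M \<nu>" "\<lambda>_. borel"] by simp
  have gap: "\<delta> \<le> ereal (cyclic_cost_gap c k z)" "ereal (cyclic_cost_gap c k z) \<le> \<delta>'" if "z \<in> A" for z
    using assms(12) that by (auto simp: A_set_eq)
  show ?thesis
  proof (intro conjI allI impI)
    fix \<epsilon> :: real assume "0 < \<epsilon>"
    show "measure (PiM {..<k} (\<lambda>_. \<pi> \<epsilon>)) A \<le> exp_neg_div \<delta> \<epsilon>"
      using assms(1,3) assms(7)[OF \<open>0 < \<epsilon>\<close>] \<open>0 < \<epsilon>\<close> \<open>0 < k\<close> A gap(1) \<open>0 \<le> \<delta>\<close>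
      by (rule measure_PiM_cyc_inv_coupling_le_exp_neg_div)
  next
    show "- \<delta>' \<le> Liminf (at_right 0) (\<lambda>\<epsilon>. ereal \<epsilon> * elog (measure (PiM {..<k} (\<lambda>_. \<pi> \<epsilon>)) A))"
      if "Liminf (at_right 0) (\<lambda>\<epsilon>. ereal \<epsilon> * elog (measure (PiM {..<k} (\<lambda>_. \<pi> \<epsilon>)) (shift_y k ` A))) = 0"
      using assms(1,3,7) \<open>0 < k\<close> A gap(2) order_trans[OF assms(9,10)] that
      by (rule Liminf_elog_measure_PiM_cyc_inv_coupling_ge)
  qed
qed

end
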